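(* Let $\alpha=(a,\alpha_1,\dots,\alpha_r,\varepsilon,\alpha_{r+2},\dots,\alpha_n)$ be an $\tilde{\mathbb N}$-composition, where $r\in\mathbb N$, $a,\alpha_1,\dots,\alpha_r$ are positive integers and $\alpha_{r+2},\dots,\alpha_n\in\{\varepsilon,1,2,\dots\}$. Let $I$ be the ideal of $\mathrm{WCQSym}$ generated by $B_\varepsilon=\{M_\gamma:\gamma\in\mathcal C_\varepsilon\}$. Then $$M_\alpha+M_{(a,\alpha_1,\dots,\alpha_r,\alpha_{r+2},\dots,\alpha_n)}\in I.$$
   Context: $\tilde{\mathbb N}=\mathbb N\cup\{\varepsilon\}$ with $0+\varepsilon=\varepsilon+\varepsilon=\varepsilon$ and $n+\varepsilon=n$ for integers $n\ge1$. $\mathbf{k}$ is a commutative ring containing $\mathbb Q$; $\mathbf{k}[[X]]_{\tilde{\mathbb N}}$, $X=\{x_1<x_2<\cdots\}$, is the algebra of possibly infinite linear combinations of formal monomials $\prod x_i^{f(x_i)}$ with $f$ finitely supported $\tilde{\mathbb N}$-valued, multiplied by adding exponents in $\tilde{\mathbb N}$. An $\tilde{\mathbb N}$-composition is a finite (possibly empty) sequence of elements of $\{\varepsilon,1,2,\dots\}$; $M_{(\gamma_1,\dots,\gamma_k)}=\sum_{1\le i_1<\cdots<i_k}x_{i_1}^{\gamma_1}\cdots x_{i_k}^{\gamma_k}$, $M_\emptyset=1$, and $\mathrm{WCQSym}$ is their $\mathbf k$-span, a subalgebra of $\mathbf{k}[[X]]_{\tilde{\mathbb N}}$. $\mathcal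 C_\varepsilon$ denotes the set of $\tilde{\mathbb N}$-compositions whose first entry is $\varepsilon$. *)

theory Defs
  imports Main
begin

text \<open>The semiring N-tilde = N plus an extra element eps, with 0+eps = eps+eps = eps
  and n+eps = n for n >= 1.  Num 0 is the integer 0.\<close>
datatype ntilde = Eps | Num nat

fun nadd :: "ntilde \<Rightarrow> ntilde \<Rightarrow> ntilde" where
  "nadd (Num m) (Num n) = Num (m + n)"
| "nadd Eps Eps = Eps"
| "nadd Eps (Num n) = (if n = 0 then Eps else Num n)"
| "nadd (Num n) Eps = (if n = 0 then Eps else Num n)"

text \<open>Exponent vectors: the variables are x_0 < x_1 < ... (indexed by nat);
  a formal monomial is a finitely supported function nat => ntilde
  (support = positions with exponent different from Num 0).\<close>
type_synonym expo = "nat \<Rightarrow> ntilde"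

definition fin_supp :: "expo \<Rightarrow> bool" where
  "fin_supp f \<longleftrightarrow> finite {i. f i \<noteq> Num 0}"

definition expo_add :: "expo \<Rightarrow> expo \<Rightarrow> expo" where
  "expo_add p q = (\<lambda>i. nadd (p i) (q i))"

text \<open>Elements of k[[X]]_Ntilde: coefficient functions on formal monomials
  (the coefficient of a non finitely supported exponent is meaningless; all
  series considered below vanish there).\<close>
type_synonym 'k ser = "expo \<Rightarrow> 'k"

definition ser_add :: "'k::comm_ring_1 ser \<Rightarrow> 'k ser \<Rightarrow> 'k ser" where
  "ser_add f g = (\<lambda>m. f m + g m)"

definition ser_mult :: "'k::comm_ring_1 ser \<Rightarrow> 'k ser \<Rightarrow> 'k ser" where
  "ser_mult f g = (\<lambda>m. if fin_supp m then
      (\<Sum>(p, q) \<in> {(p, q). expo_add p q = m}. f p * g q) else 0)"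

definition is_comp :: "ntilde list \<Rightarrow> bool" where
  "is_comp \<gamma> \<longleftrightarrow> (\<forall>e \<in> set \<gamma>. e \<noteq> Num 0)"

text \<open>The monomial x_{i_1}^{g_1} ... x_{i_k}^{g_k}.\<close>
definition expo_of :: "nat list \<Rightarrow> ntilde list \<Rightarrow> expo" where
  "expo_of is \<gamma> = (\<lambda>x. case map_of (zip is \<gamma>) x of None \<Rightarrow> Num 0 | Some e \<Rightarrow> e)"

definition Mq :: "ntilde list \<Rightarrow> 'k::comm_ring_1 ser" where
  "Mq \<gamma> = (\<lambda>m. if (\<exists>is. length is = length \<gamma> \<and> sorted_wrt (<) is \<and> m = expo_of is \<gamma>)
               then 1 else 0)"

definition WCQSym :: "'k::comm_ring_1 ser set" where
  "WCQSym = {f. \<exists>S c. finite S \<and> (\<forall>\<gamma>\<in>S. is_comp \<gamma>) \<and>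
                  f = (\<lambda>m. \<Sum>\<gamma>\<in>S. c \<gamma> * Mq \<gamma> m)}"

definition C_eps :: "ntilde list set" where
  "C_eps = {\<gamma>. is_comp \<gamma> \<and> \<gamma> \<noteq> [] \<and> hd \<gamma> = Eps}"

definition ideal_gen :: "'k::comm_ring_1 ser set \<Rightarrow> 'k ser set \<Rightarrow> 'k ser set" where
  "ideal_gen A B = {x. \<exists>(n::nat) a b. (\<forall>i<n. a i \<in> A \<and> b i \<in> B) \<and>
                        x = (\<lambda>m. \<Sum>i<n. ser_mult (a i) (b i) m)}"

end

theory Submission
  imports Defs
begin

text \<open>Peeling off the smallest variable of a monomial shows coefficientwise that
  \<open>M\<^sub>u M\<^sub>v\<close> is the sum of the \<open>M\<^sub>w\<close> over the quasi-shuffles \<open>w\<close> of \<open>u\<close> and \<open>v\<close>, where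
  merged letters are added in \<open>\<tilde>\<nat>\<close>. For a nonempty prefix \<open>Q\<close> put
  \<open>P(Q, R) = M\<^sub>Q\<^sub>\<epsilon>\<^sub>R + M\<^sub>Q\<^sub>R\<close>. In the product \<open>M\<^sub>c\<^sub>\<alpha> M\<^sub>\<epsilon>\<^sub>R\<close>, which lies in the ideal,
  the terms beginning with \<open>\<epsilon>\<close> are generators, and since \<open>c + \<epsilon> = c\<close> the remaining
  terms are the \<open>M\<^sub>c\<^sub>w\<close> with \<open>w\<close> a quasi-shuffle of \<open>\<alpha>\<close> with \<open>\<epsilon>R\<close> or with \<open>R\<close>.
  Moving the letters of \<open>\<alpha>\<close> one at a time into the prefix changes such a sum only by
  sums of \<open>P(Q', X)\<close> with shorter prefixes \<open>Q'\<close>, so induction on the length of the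
  prefix puts every \<open>P(Q, R)\<close> into the ideal.\<close>

lemma nadd_eq_Num0_iff: "nadd x y = Num 0 \<longleftrightarrow> x = Num 0 \<and> y = Num 0"
  by (cases x; cases y) auto

lemma nadd_Num0_left [simp]: "nadd (Num 0) y = y"
  by (cases y) auto

lemma nadd_Num0_right [simp]: "nadd x (Num 0) = x"
  by (cases x) auto

lemma nadd_Eps_right: "x \<noteq> Num 0 \<Longrightarrow> nadd x Eps = x"
  by (cases x) auto

lemma is_comp_Nil [simp]: "is_comp []"
  by (simp add: is_comp_def)

lemma is_comp_Cons [simp]: "is_comp (x # u) \<longleftrightarrow> x \<noteq> Num 0 \<and> is_comp u"
  by (auto simp: is_comp_def)

lemma is_comp_append [simp]: "is_comp (u @ v) \<longleftrightarrow> is_comp u \<and> is_comp v"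
  by (auto simp: is_comp_def)

lemma is_comp_tl: "is_comp u \<Longrightarrow> is_comp (tl u)"
  by (cases u) auto

fun quasi_shuffles :: "ntilde list \<Rightarrow> ntilde list \<Rightarrow> ntilde list list" where
  "quasi_shuffles [] v = [v]"
| "quasi_shuffles u [] = [u]"
| "quasi_shuffles (x # u) (y # v) =
     map ((#) x) (quasi_shuffles u (y # v)) @ map ((#) y) (quasi_shuffles (x # u) v)
     @ map ((#) (nadd x y)) (quasi_shuffles u v)"

lemma quasi_shuffles_Nil_right [simp]: "quasi_shuffles u [] = [u]"
  by (cases u) auto

lemma is_comp_quasi_shuffles:
  "is_comp u \<Longrightarrow> is_comp v \<Longrightarrow> \<forall>w \<in> set (quasi_shuffles u v). is_comp w"
proof (induction u v rule: quasi_shuffles.induct)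
  case (3 x u y v)
  have xy: "x \<noteq> Num 0" "y \<noteq> Num 0" and uv: "is_comp u" "is_comp v"
    using "3.prems" by auto
  have "nadd x y \<noteq> Num 0" using xy by (simp add: nadd_eq_Num0_iff)
  moreover have "\<forall>w \<in> set (quasi_shuffles u (y # v)). is_comp w" using "3.IH"(1) uv xy by simp
  moreover have "\<forall>w \<in> set (quasi_shuffles (x # u) v). is_comp w" using "3.IH"(2) uv xy by simp
  moreover have "\<forall>w \<in> set (quasi_shuffles u v). is_comp w" using "3.IH"(3) uv by simp
  ultimately show ?case using xy by (simp only: quasi_shuffles.simps set_append set_map) auto
qed simp_all

lemma quasi_shuffles_ne_Nil:
  "u \<noteq> [] \<or> v \<noteq> [] \<Longrightarrow> w \<in> set (quasi_shuffles u v) \<Longrightarrow> w \<noteq> []"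
  by (cases u; cases v) auto

lemma expo_of_Nil [simp]: "expo_of [] \<gamma> = (\<lambda>_. Num 0)"
  by (simp add: expo_of_def)

lemma expo_of_Cons: "expo_of (j # js) (c # \<gamma>) = (expo_of js \<gamma>)(j := c)"
  by (auto simp: expo_of_def fun_eq_iff)

lemma expo_of_notin: "k \<notin> set is \<Longrightarrow> expo_of is \<gamma> k = Num 0"
proof -
  assume "k \<notin> set is"
  then have "map_of (zip is \<gamma>) k = None"
    by (auto simp: map_of_eq_None_iff dest: set_zip_leftD)
  then show ?thesis by (simp add: expo_of_def)
qed

lemma expo_of_eq_Num0_iff:
  assumes "is_comp \<gamma>" and "length is = length \<gamma>"
  shows "expo_of is \<gamma> k = Num 0 \<longleftrightarrow> k \<notin> set is"
  using assms
proof (induction "is" arbitrary: \<gamma>)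
  case (Cons j js)
  then obtain c \<gamma>' where "\<gamma> = c # \<gamma>'" by (cases \<gamma>) auto
  with Cons show ?case by (auto simp: expo_of_Cons)
qed simp

definition is_Mq_term :: "ntilde list \<Rightarrow> expo \<Rightarrow> bool" where
  "is_Mq_term \<gamma> m \<longleftrightarrow> (\<exists>is. length is = length \<gamma> \<and> sorted_wrt (<) is \<and> m = expo_of is \<gamma>)"

lemma Mq_eq: "Mq \<gamma> m = (if is_Mq_term \<gamma> m then 1 else 0)"
  by (simp add: Mq_def is_Mq_term_def)

lemma is_Mq_term_Nil: "is_Mq_term [] m \<longleftrightarrow> m = (\<lambda>_. Num 0)"
  by (simp add: is_Mq_term_def)

lemma is_Mq_term_fin_supp: "is_Mq_term \<gamma> m \<Longrightarrow> fin_supp m"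
proof -
  assume "is_Mq_term \<gamma> m"
  then obtain "is" where "m = expo_of is \<gamma>" by (auto simp: is_Mq_term_def)
  then have "{i. m i \<noteq> Num 0} \<subseteq> set is" using expo_of_notin by blast
  then show ?thesis unfolding fin_supp_def by (rule finite_subset) simp
qed

lemma not_is_Mq_term_zero:
  assumes "is_comp \<gamma>" and "\<gamma> \<noteq> []"
  shows "\<not> is_Mq_term \<gamma> (\<lambda>_. Num 0)"
proof
  assume "is_Mq_term \<gamma> (\<lambda>_. Num 0)"
  then obtain "is" where len: "length is = length \<gamma>" and eq: "(\<lambda>_. Num 0) = expo_of is \<gamma>"
    by (auto simp: is_Mq_term_def)
  from len assms(2) obtain k where "k \<in> set is" by (cases "is") auto
  then show False
    using expo_of_eq_Num0_iff[OF assms(1) len, of k] fun_cong[OF eq, of k] by simp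
qed

lemma Mq_not_fin_supp: "\<not> fin_supp m \<Longrightarrow> Mq \<gamma> m = 0"
  using is_Mq_term_fin_supp by (auto simp: Mq_eq)

lemma Mq_zero: "is_comp \<gamma> \<Longrightarrow> Mq \<gamma> (\<lambda>_. Num 0) = (if \<gamma> = [] then 1 else 0)"
  using not_is_Mq_term_zero by (auto simp: Mq_eq is_Mq_term_Nil)

lemma is_Mq_term_Cons_fun_updD:
  assumes comp: "is_comp (c # \<gamma>)" and zero: "\<forall>j\<le>i. p j = Num 0" and x: "x \<noteq> Num 0"
    and upd: "is_Mq_term (c # \<gamma>) (p(i := x))"
  shows "c = x \<and> is_Mq_term \<gamma> p"
proof -
  obtain j js where len: "length js = length \<gamma>" and sorted: "sorted_wrt (<) (j # js)"
    and eq: "p(i := x) = (expo_of js \<gamma>)(j := c)"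
    using upd by (auto simp: is_Mq_term_def length_Suc_conv expo_of_Cons)
  have "j = i"
  proof (rule ccontr)
    assume "j \<noteq> i"
    with eq x have "expo_of js \<gamma> i \<noteq> Num 0" by (metis fun_upd_same fun_upd_other)
    then have "i \<in> set js" using expo_of_notin by blast
    then have "j < i" using sorted by simp
    moreover have "p j = c" using fun_cong[OF eq, of j] \<open>j \<noteq> i\<close> by simp
    ultimately show False using zero comp by simp
  qed
  then have "c = x" using fun_cong[OF eq, of i] by simp
  moreover have "p = expo_of js \<gamma>"
  proof
    fix k
    show "p k = expo_of js \<gamma> k"
    proof (cases "k = i")
      case True
      then have "k \<notin> set js" using sorted \<open>j = i\<close> by auto
      with True zero show ?thesis by (simp add: expo_of_notin)
    next
      case False
      then show ?thesis using fun_cong[OF eq, of k] \<open>j = i\<close> by simp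
    qed
  qed
  ultimately show ?thesis using len sorted by (auto simp: is_Mq_term_def)
qed

lemma is_Mq_term_Cons_fun_upd:
  assumes comp: "is_comp (c # \<gamma>)" and zero: "\<forall>j\<le>i. p j = Num 0" and x: "x \<noteq> Num 0"
  shows "is_Mq_term (c # \<gamma>) (p(i := x)) \<longleftrightarrow> c = x \<and> is_Mq_term \<gamma> p"
proof
  show "c = x \<and> is_Mq_term \<gamma> p" if "is_Mq_term (c # \<gamma>) (p(i := x))"
    using is_Mq_term_Cons_fun_updD[OF assms that] .
next
  assume "c = x \<and> is_Mq_term \<gamma> p"
  then obtain js where "c = x" and len: "length js = length \<gamma>" and sorted: "sorted_wrt (<) js"
    and p: "p = expo_of js \<gamma>"
    by (auto simp: is_Mq_term_def)
  have "\<forall>k \<in> set js. i < k"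
  proof
    fix k
    assume "k \<in> set js"
    then have "p k \<noteq> Num 0" using p expo_of_eq_Num0_iff[of \<gamma> js k] comp len by simp
    then show "i < k" using zero not_le by blast
  qed
  then show "is_Mq_term (c # \<gamma>) (p(i := x))"
    unfolding is_Mq_term_def using len sorted p \<open>c = x\<close>
    by (intro exI[of _ "i # js"]) (simp add: expo_of_Cons)
qed

lemma Mq_fun_upd:
  assumes "is_comp \<gamma>" and "\<forall>j\<le>i. p j = Num 0" and "x \<noteq> Num 0"
  shows "Mq \<gamma> (p(i := x)) = (if \<gamma> \<noteq> [] \<and> hd \<gamma> = x then Mq (tl \<gamma>) p else 0)"
proof (cases \<gamma>)
  case Nil
  have "p(i := x) \<noteq> (\<lambda>_. Num 0)" using assms(3) by (metis fun_upd_same)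
  with Nil show ?thesis by (simp add: Mq_eq is_Mq_term_Nil)
next
  case (Cons c \<gamma>')
  with assms show ?thesis by (simp add: Mq_eq is_Mq_term_Cons_fun_upd)
qed

section \<open>The quasi-shuffle product of monomial functions\<close>

definition expo_splits :: "expo \<Rightarrow> (expo \<times> expo) set" where
  "expo_splits m = {(p, q). expo_add p q = m}"

definition ntilde_splits :: "ntilde \<Rightarrow> (ntilde \<times> ntilde) set" where
  "ntilde_splits e = {(x, y). nadd x y = e}"

lemma finite_ntilde_splits: "finite (ntilde_splits e)"
proof -
  define N where "N = (case e of Num n \<Rightarrow> n | Eps \<Rightarrow> 0)"
  define X where "X = insert Eps (Num ` {..N})"
  have "ntilde_splits e \<subseteq> X \<times> X"
  proof
    fix z
    assume "z \<in> ntilde_splits e"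
    then obtain x y where "z = (x, y)" and "nadd x y = e" by (auto simp: ntilde_splits_def)
    then show "z \<in> X \<times> X" unfolding X_def N_def
      by (cases x; cases y) (auto split: if_splits)
  qed
  then show ?thesis by (rule finite_subset) (simp add: X_def)
qed

lemma sum_ntilde_splits:
  assumes "e \<noteq> Num 0"
  shows "(\<Sum>(x, y) \<in> ntilde_splits e. g x y) = g e (Num 0) + g (Num 0) e
           + (\<Sum>(x, y) \<in> {(x, y). x \<noteq> Num 0 \<and> y \<noteq> Num 0 \<and> nadd x y = e}. g x y)"
proof -
  define T where "T = {(x, y). x \<noteq> Num 0 \<and> y \<noteq> Num 0 \<and> nadd x y = e}"
  have "finite T"
    by (rule finite_subset[OF _ finite_ntilde_splits[of e]]) (auto simp: T_def ntilde_splits_def)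
  moreover have "ntilde_splits e = insert (e, Num 0) (insert (Num 0, e) T)"
    by (auto simp: ntilde_splits_def T_def nadd_eq_Num0_iff)
  moreover have "(e, Num 0) \<notin> insert (Num 0, e) T" and "(Num 0, e) \<notin> T"
    using assms by (auto simp: T_def)
  ultimately show ?thesis by (simp add: T_def add.assoc)
qed

lemma expo_splits_vanish:
  "(p, q) \<in> expo_splits m \<Longrightarrow> m j = Num 0 \<Longrightarrow> p j = Num 0 \<and> q j = Num 0"
  by (auto simp: expo_splits_def expo_add_def nadd_eq_Num0_iff)

lemma expo_splits_zero: "expo_splits (\<lambda>_. Num 0) = {(\<lambda>_. Num 0, \<lambda>_. Num 0)}"
  by (auto simp: expo_splits_def expo_add_def fun_eq_iff nadd_eq_Num0_iff)

lemma bij_betw_expo_splits_fun_upd: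
  assumes "m i = Num 0"
  shows "bij_betw (\<lambda>((x, y), (p, q)). (p(i := x), q(i := y)))
           (ntilde_splits e \<times> expo_splits m) (expo_splits (m(i := e)))"
  unfolding bij_betw_def
proof
  show "inj_on (\<lambda>((x, y), (p, q)). (p(i := x), q(i := y))) (ntilde_splits e \<times> expo_splits m)"
  proof (rule inj_onI)
    fix a b
    assume a: "a \<in> ntilde_splits e \<times> expo_splits m" and b: "b \<in> ntilde_splits e \<times> expo_splits m"
      and eq: "(\<lambda>((x, y), (p, q)). (p(i := x), q(i := y))) a
             = (\<lambda>((x, y), (p, q)). (p(i := x), q(i := y))) b"
    obtain x y p q x' y' p' q' where ab: "a = ((x, y), (p, q))" "b = ((x', y'), (p', q'))"
      by (metis prod.exhaust)
    have "p i = Num 0" "q i = Num 0" "p' i = Num 0" "q' i = Num 0"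
      using a b ab expo_splits_vanish assms by blast+
    moreover have "p(i := x) = p'(i := x')" "q(i := y) = q'(i := y')"
      using eq ab by simp_all
    ultimately show "a = b"
      unfolding ab by (metis fun_upd_same fun_upd_triv fun_upd_upd)
  qed
  show "(\<lambda>((x, y), (p, q)). (p(i := x), q(i := y))) ` (ntilde_splits e \<times> expo_splits m)
      = expo_splits (m(i := e))"
  proof
    show "(\<lambda>((x, y), (p, q)). (p(i := x), q(i := y))) ` (ntilde_splits e \<times> expo_splits m)
        \<subseteq> expo_splits (m(i := e))"
      by (auto simp: expo_splits_def ntilde_splits_def expo_add_def)
  next
    show "expo_splits (m(i := e))
        \<subseteq> (\<lambda>((x, y), (p, q)). (p(i := x), q(i := y))) ` (ntilde_splits e \<times> expo_splits m)"
    proof clarify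
      fix p q
      assume pq: "(p, q) \<in> expo_splits (m(i := e))"
      then have "((p i, q i), (p(i := Num 0), q(i := Num 0))) \<in> ntilde_splits e \<times> expo_splits m"
        using assms by (auto simp: expo_splits_def ntilde_splits_def expo_add_def fun_eq_iff
            dest: fun_cong[of _ _ i] split: if_splits)
      then show "(p, q) \<in> (\<lambda>((x, y), (p, q)). (p(i := x), q(i := y))) ` (ntilde_splits e \<times> expo_splits m)"
        by (rule rev_image_eqI) simp
    qed
  qed
qed

definition Mq_conv :: "ntilde list \<Rightarrow> ntilde list \<Rightarrow> 'k::comm_ring_1 ser" where
  "Mq_conv u v m = (\<Sum>(p, q) \<in> expo_splits m. Mq u p * Mq v q)"

lemma Mq_conv_zero:
  assumes "is_comp u" and "is_comp v"
  shows "Mq_conv u v (\<lambda>_. Num 0) = (if u = [] \<and> v = [] then 1 else 0)"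
  using assms by (simp add: Mq_conv_def expo_splits_zero Mq_zero)

definition Mq_lead :: "ntilde list \<Rightarrow> ntilde \<Rightarrow> expo \<Rightarrow> 'k::comm_ring_1" where
  "Mq_lead \<gamma> x p = (if x = Num 0 then Mq \<gamma> p else if \<gamma> \<noteq> [] \<and> hd \<gamma> = x then Mq (tl \<gamma>) p else 0)"

lemma Mq_fun_upd_eq_Mq_lead:
  assumes "is_comp \<gamma>" and "\<forall>j\<le>i. p j = Num 0"
  shows "Mq \<gamma> (p(i := x)) = Mq_lead \<gamma> x p"
proof (cases "x = Num 0")
  case True
  with assms(2) show ?thesis by (simp add: Mq_lead_def fun_upd_idem)
next
  case False
  with Mq_fun_upd[OF assms False] show ?thesis by (simp add: Mq_lead_def)
qed

lemma sum_nonzero_splits_Mq_lead: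
  assumes "is_comp u" and "is_comp v"
  shows "(\<Sum>(x, y) \<in> {(x, y). x \<noteq> Num 0 \<and> y \<noteq> Num 0 \<and> nadd x y = e}.
            \<Sum>(p, q) \<in> E. Mq_lead u x p * Mq_lead v y q)
       = (if u \<noteq> [] \<and> v \<noteq> [] \<and> nadd (hd u) (hd v) = e
          then \<Sum>(p, q) \<in> E. Mq (tl u) p * Mq (tl v) q else (0::'k::comm_ring_1))"
    (is "(\<Sum>(x, y) \<in> ?T. ?C x y) = _")
proof -
  define c where "c = (if u \<noteq> [] \<and> v \<noteq> [] then \<Sum>(p, q) \<in> E. Mq (tl u) p * Mq (tl v) q else (0::'k))"
  have "finite ?T"
    by (rule finite_subset[OF _ finite_ntilde_splits[of e]]) (auto simp: ntilde_splits_def)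
  have "(\<Sum>(x, y) \<in> ?T. ?C x y) = (\<Sum>z \<in> ?T. if z = (hd u, hd v) then c else 0)"
  proof (intro sum.cong refl, clarify)
    fix x y
    assume "x \<noteq> Num 0" "y \<noteq> Num 0"
    then show "?C x y = (if (x, y) = (hd u, hd v) then c else 0)"
      by (cases "u \<noteq> [] \<and> hd u = x \<and> v \<noteq> [] \<and> hd v = y")
        (auto simp: Mq_lead_def case_prod_beta c_def)
  qed
  also have "\<dots> = (if (hd u, hd v) \<in> ?T then c else 0)"
    using \<open>finite ?T\<close> by (simp add: sum.delta')
  also have "\<dots> = (if u \<noteq> [] \<and> v \<noteq> [] \<and> nadd (hd u) (hd v) = e
                   then \<Sum>(p, q) \<in> E. Mq (tl u) p * Mq (tl v) q else 0)"
    using assms by (cases u; cases v) (auto simp: c_def)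
  finally show ?thesis .
qed

lemma Mq_conv_fun_upd:
  assumes zero: "\<forall>j\<le>i. m j = Num 0" and e: "e \<noteq> Num 0" and comp: "is_comp u" "is_comp v"
  shows "(Mq_conv u v (m(i := e)) :: 'k::comm_ring_1) =
           (if u \<noteq> [] \<and> hd u = e then Mq_conv (tl u) v m else 0)
         + (if v \<noteq> [] \<and> hd v = e then Mq_conv u (tl v) m else 0)
         + (if u \<noteq> [] \<and> v \<noteq> [] \<and> nadd (hd u) (hd v) = e then Mq_conv (tl u) (tl v) m else 0)"
proof -
  define C :: "ntilde \<Rightarrow> ntilde \<Rightarrow> 'k" where
    "C x y = (\<Sum>(p, q) \<in> expo_splits m. Mq_lead u x p * Mq_lead v y q)" for x y
  have "m i = Num 0" using zero by simp
  then have "Mq_conv u v (m(i := e))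
      = (\<Sum>(x, y) \<in> ntilde_splits e. \<Sum>(p, q) \<in> expo_splits m. Mq u (p(i := x)) * Mq v (q(i := y)))"
    unfolding Mq_conv_def
    by (subst sum.reindex_bij_betw[OF bij_betw_expo_splits_fun_upd, symmetric])
      (simp_all add: sum.cartesian_product split_def)
  also have "\<dots> = (\<Sum>(x, y) \<in> ntilde_splits e. C x y)"
  proof -
    have "Mq u (p(i := x)) * Mq v (q(i := y)) = Mq_lead u x p * Mq_lead v y q"
      if "(p, q) \<in> expo_splits m" for p q x y
    proof -
      have "\<forall>j\<le>i. p j = Num 0" "\<forall>j\<le>i. q j = Num 0"
        using expo_splits_vanish[OF that] zero by blast+
      then show ?thesis using comp by (simp add: Mq_fun_upd_eq_Mq_lead)
    qed
    then show ?thesis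
      unfolding C_def by (intro sum.cong refl) (auto simp: split_def intro!: sum.cong)
  qed
  also have "\<dots> = C e (Num 0) + C (Num 0) e
      + (\<Sum>(x, y) \<in> {(x, y). x \<noteq> Num 0 \<and> y \<noteq> Num 0 \<and> nadd x y = e}. C x y)"
    by (rule sum_ntilde_splits[OF e])
  also have "C e (Num 0) = (if u \<noteq> [] \<and> hd u = e then Mq_conv (tl u) v m else 0)"
    using e by (cases "u \<noteq> [] \<and> hd u = e") (auto simp: C_def Mq_lead_def Mq_conv_def case_prod_beta)
  also have "C (Num 0) e = (if v \<noteq> [] \<and> hd v = e then Mq_conv u (tl v) m else 0)"
    using e by (cases "v \<noteq> [] \<and> hd v = e") (auto simp: C_def Mq_lead_def Mq_conv_def case_prod_beta)
  also have "(\<Sum>(x, y) \<in> {(x, y). x \<noteq> Num 0 \<and> y \<noteq> Num 0 \<and> nadd x y = e}. C x y)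
      = (if u \<noteq> [] \<and> v \<noteq> [] \<and> nadd (hd u) (hd v) = e then Mq_conv (tl u) (tl v) m else 0)"
    unfolding C_def Mq_conv_def by (rule sum_nonzero_splits_Mq_lead[OF comp])
  finally show ?thesis .
qed

definition Mq_quasi_shuffle :: "ntilde list \<Rightarrow> ntilde list \<Rightarrow> 'k::comm_ring_1 ser" where
  "Mq_quasi_shuffle u v = (\<lambda>m. \<Sum>w \<leftarrow> quasi_shuffles u v. Mq w m)"

lemma Mq_quasi_shuffle_zero:
  assumes "is_comp u" and "is_comp v"
  shows "Mq_quasi_shuffle u v (\<lambda>_. Num 0) = (if u = [] \<and> v = [] then 1 else 0)"
proof (cases "u = [] \<and> v = []")
  case False
  have "Mq w (\<lambda>_. Num 0) = 0" if "w \<in> set (quasi_shuffles u v)" for w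
  proof -
    have "w \<noteq> []" using quasi_shuffles_ne_Nil False that by blast
    moreover have "is_comp w" using is_comp_quasi_shuffles[OF assms] that by blast
    ultimately show ?thesis by (simp add: Mq_zero)
  qed
  then have "Mq_quasi_shuffle u v (\<lambda>_. Num 0) = (\<Sum>w \<leftarrow> quasi_shuffles u v. 0)"
    unfolding Mq_quasi_shuffle_def by (intro arg_cong[where f = sum_list] map_cong) simp_all
  also have "\<dots> = (if u = [] \<and> v = [] then 1 else 0)" using False by simp
  finally show ?thesis .
qed (simp add: Mq_quasi_shuffle_def Mq_zero)

lemma sum_Mq_Cons_fun_upd:
  assumes "\<forall>j\<le>i. m j = Num 0" and "e \<noteq> Num 0" and "c \<noteq> Num 0" and "\<forall>w \<in> set L. is_comp w"
  shows "(\<Sum>w \<leftarrow> map ((#) c) L. Mq w (m(i := e))) = (if c = e then \<Sum>w \<leftarrow> L. Mq w m else 0)"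
proof -
  have "(\<Sum>w \<leftarrow> map ((#) c) L. Mq w (m(i := e))) = (\<Sum>w \<leftarrow> L. if c = e then Mq w m else 0)"
    unfolding map_map comp_def using assms
    by (intro arg_cong[where f = sum_list] map_cong refl) (simp add: Mq_fun_upd)
  then show ?thesis by (cases "c = e") simp_all
qed

lemma Mq_quasi_shuffle_fun_upd:
  assumes zero: "\<forall>j\<le>i. m j = Num 0" and e: "e \<noteq> Num 0" and comp: "is_comp u" "is_comp v"
  shows "(Mq_quasi_shuffle u v (m(i := e)) :: 'k::comm_ring_1) =
           (if u \<noteq> [] \<and> hd u = e then Mq_quasi_shuffle (tl u) v m else 0)
         + (if v \<noteq> [] \<and> hd v = e then Mq_quasi_shuffle u (tl v) m else 0)
         + (if u \<noteq> [] \<and> v \<noteq> [] \<and> nadd (hd u) (hd v) = e then Mq_quasi_shuffle (tl u) (tl v) m else 0)"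
proof (cases u)
  case Nil
  have "Mq v (m(i := e)) = (if v \<noteq> [] \<and> hd v = e then Mq (tl v) m else (0::'k))"
    by (rule Mq_fun_upd[OF comp(2) zero e])
  with Nil show ?thesis by (simp add: Mq_quasi_shuffle_def)
next
  case (Cons c u')
  show ?thesis
  proof (cases v)
    case Nil
    have "Mq u (m(i := e)) = (if u \<noteq> [] \<and> hd u = e then Mq (tl u) m else (0::'k))"
      by (rule Mq_fun_upd[OF comp(1) zero e])
    with \<open>u = c # u'\<close> Nil show ?thesis by (simp add: Mq_quasi_shuffle_def)
  next
    case (Cons d v')
    have cd: "c \<noteq> Num 0" "d \<noteq> Num 0" "nadd c d \<noteq> Num 0" and u'v': "is_comp u'" "is_comp v'"
      using comp \<open>u = c # u'\<close> Cons by (auto simp: nadd_eq_Num0_iff)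
    have "\<forall>w \<in> set (quasi_shuffles u' (d # v')). is_comp w"
      using is_comp_quasi_shuffles[OF u'v'(1)] comp(2) Cons by blast
    moreover have "\<forall>w \<in> set (quasi_shuffles (c # u') v'). is_comp w"
      using is_comp_quasi_shuffles[OF _ u'v'(2)] comp(1) \<open>u = c # u'\<close> by blast
    moreover have "\<forall>w \<in> set (quasi_shuffles u' v'). is_comp w"
      using is_comp_quasi_shuffles[OF u'v'] .
    ultimately show ?thesis
      unfolding Mq_quasi_shuffle_def \<open>u = c # u'\<close> Cons
      by (simp only: quasi_shuffles.simps map_append sum_list_append list.sel list.distinct(2)
          simp_thms add.assoc sum_Mq_Cons_fun_upd[OF zero e] cd)
  qed
qed

lemma fin_supp_induct [consumes 1, case_names zero fun_upd]:
  assumes "fin_supp m"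
    and zero: "P (\<lambda>_. Num 0)"
    and fun_upd: "\<And>m i e. fin_supp m \<Longrightarrow> \<forall>j\<le>i. m j = Num 0 \<Longrightarrow> e \<noteq> Num 0 \<Longrightarrow> P m
                    \<Longrightarrow> P (m(i := e))"
  shows "P m"
  using assms(1)
proof (induction "card {j. m j \<noteq> Num 0}" arbitrary: m rule: less_induct)
  case less
  show ?case
  proof (cases "m = (\<lambda>_. Num 0)")
    case True
    with zero show ?thesis by simp
  next
    case False
    define D where "D = {j. m j \<noteq> Num 0}"
    define i where "i = Min D"
    define m' where "m' = m(i := Num 0)"
    have "finite D" using less.prems by (simp add: fin_supp_def D_def)
    moreover have "D \<noteq> {}" using False by (auto simp: D_def)
    ultimately have "i \<in> D" and i_min: "\<And>j. j \<in> D \<Longrightarrow> i \<le> j"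
      by (simp_all add: i_def)
    have supp': "{j. m' j \<noteq> Num 0} = D - {i}" by (auto simp: m'_def D_def)
    have "fin_supp m'" using \<open>finite D\<close> supp' by (simp add: fin_supp_def)
    moreover have "\<forall>j\<le>i. m' j = Num 0"
      using i_min by (auto simp: m'_def D_def) (metis le_antisym)
    moreover have "m i \<noteq> Num 0" using \<open>i \<in> D\<close> by (simp add: D_def)
    moreover have "card {j. m' j \<noteq> Num 0} < card {j. m j \<noteq> Num 0}"
      unfolding supp' D_def[symmetric] using \<open>finite D\<close> \<open>i \<in> D\<close> by (rule card_Diff1_less)
    then have "P m'" using less.hyps \<open>fin_supp m'\<close> by blast
    ultimately have "P (m'(i := m i))" by (rule fun_upd)
    then show ?thesis by (simp add: m'_def)
  qed
qed

lemma Mq_conv_eq_Mq_quasi_shuffle: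
  assumes "fin_supp m" and "is_comp u" and "is_comp v"
  shows "(Mq_conv u v m :: 'k::comm_ring_1) = Mq_quasi_shuffle u v m"
  using assms
proof (induction m arbitrary: u v rule: fin_supp_induct)
  case zero
  then show ?case by (simp add: Mq_conv_zero Mq_quasi_shuffle_zero)
next
  case (fun_upd m i e)
  have IH: "(Mq_conv u' v' m :: 'k) = Mq_quasi_shuffle u' v' m" if "is_comp u'" "is_comp v'" for u' v'
    using that by (rule fun_upd.IH)
  have tl: "is_comp (tl u)" "is_comp (tl v)" using fun_upd.prems by (simp_all add: is_comp_tl)
  show ?case
    unfolding Mq_conv_fun_upd[OF fun_upd.hyps(2,3) fun_upd.prems]
      Mq_quasi_shuffle_fun_upd[OF fun_upd.hyps(2,3) fun_upd.prems]
    by (simp only: IH[OF tl(1) fun_upd.prems(2)] IH[OF fun_upd.prems(1) tl(2)] IH[OF tl])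
qed

theorem ser_mult_Mq:
  assumes "is_comp u" and "is_comp v"
  shows "ser_mult (Mq u) (Mq v) = Mq_quasi_shuffle u v"
proof
  fix m
  show "ser_mult (Mq u) (Mq v) m = Mq_quasi_shuffle u v m"
  proof (cases "fin_supp m")
    case True
    then show ?thesis using Mq_conv_eq_Mq_quasi_shuffle[OF True assms]
      by (simp add: ser_mult_def Mq_conv_def expo_splits_def)
  next
    case False
    then show ?thesis by (simp add: ser_mult_def Mq_quasi_shuffle_def Mq_not_fin_supp)
  qed
qed

section \<open>Ideals generated by a set of series\<close>

lemma ideal_gen_zero: "(\<lambda>_. 0) \<in> ideal_gen A B"
  unfolding ideal_gen_def by (intro CollectI exI[of _ 0]) simp

lemma ser_mult_in_ideal_gen: "a \<in> A \<Longrightarrow> b \<in> B \<Longrightarrow> ser_mult a b \<in> ideal_gen A B"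
  unfolding ideal_gen_def by (intro CollectI exI[of _ 1] exI[of _ "\<lambda>_. a"] exI[of _ "\<lambda>_. b"]) simp

lemma ideal_gen_add:
  fixes f g :: "'k::comm_ring_1 ser"
  assumes "f \<in> ideal_gen A B" and "g \<in> ideal_gen A B"
  shows "(\<lambda>m. f m + g m) \<in> ideal_gen A B"
proof -
  obtain n1 :: nat and a1 b1 where 1: "\<forall>i<n1. a1 i \<in> A \<and> b1 i \<in> B"
    and f: "f = (\<lambda>m. \<Sum>i<n1. ser_mult (a1 i) (b1 i) m)"
    using assms(1) unfolding ideal_gen_def by blast
  obtain n2 :: nat and a2 b2 where 2: "\<forall>i<n2. a2 i \<in> A \<and> b2 i \<in> B"
    and g: "g = (\<lambda>m. \<Sum>i<n2. ser_mult (a2 i) (b2 i) m)"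
    using assms(2) unfolding ideal_gen_def by blast
  define a where "a i = (if i < n1 then a1 i else a2 (i - n1))" for i
  define b where "b i = (if i < n1 then b1 i else b2 (i - n1))" for i
  have "\<forall>i<n1 + n2. a i \<in> A \<and> b i \<in> B"
    using 1 2 by (auto simp: a_def b_def)
  moreover have "(\<Sum>i<n1 + n2. h i) = (\<Sum>i<n1. h i) + (\<Sum>i<n2. h (n1 + i))" for h :: "nat \<Rightarrow> 'k"
    by (induction n2) (simp_all add: add.assoc)
  then have "(\<lambda>m. f m + g m) = (\<lambda>m. \<Sum>i<n1 + n2. ser_mult (a i) (b i) m)"
    by (simp add: f g a_def b_def)
  ultimately show ?thesis unfolding ideal_gen_def by blast
qed

lemma ideal_gen_uminus:
  fixes f :: "'k::comm_ring_1 ser"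
  assumes A_uminus: "\<And>a. a \<in> A \<Longrightarrow> (\<lambda>m. - a m) \<in> A" and "f \<in> ideal_gen A B"
  shows "(\<lambda>m. - f m) \<in> ideal_gen A B"
proof -
  obtain n :: nat and a b where ab: "\<forall>i<n. a i \<in> A \<and> b i \<in> B"
    and f: "f = (\<lambda>m. \<Sum>i<n. ser_mult (a i) (b i) m)"
    using assms(2) unfolding ideal_gen_def by blast
  have neg: "ser_mult (\<lambda>m. - a i m) (b i) = (\<lambda>m. - ser_mult (a i) (b i) m)" for i
    by (auto simp: ser_mult_def case_prod_beta sum_negf)
  have mem: "\<forall>i<n. (\<lambda>m. - a i m) \<in> A \<and> b i \<in> B" using ab A_uminus by blast
  have eq: "(\<lambda>m. - f m) = (\<lambda>m. \<Sum>i<n. ser_mult (\<lambda>m. - a i m) (b i) m)"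
    using neg by (simp add: f sum_negf)
  show ?thesis unfolding ideal_gen_def
    by (rule CollectI, rule exI[of _ n], rule exI[of _ "\<lambda>i m. - a i m"], rule exI[of _ b])
      (use mem eq in simp)
qed

lemma ideal_gen_diff:
  assumes "\<And>a. a \<in> A \<Longrightarrow> (\<lambda>m. - a m) \<in> A" and "f \<in> ideal_gen A B" and "g \<in> ideal_gen A B"
  shows "(\<lambda>m. f m - g m) \<in> ideal_gen A B"
  using ideal_gen_add[OF assms(2) ideal_gen_uminus[OF assms(1,3)]] by simp

lemma ideal_gen_sum_list:
  "(\<And>x. x \<in> set xs \<Longrightarrow> h x \<in> ideal_gen A B) \<Longrightarrow> (\<lambda>m. \<Sum>x \<leftarrow> xs. h x m) \<in> ideal_gen A B"
  by (induction xs) (simp_all add: ideal_gen_zero ideal_gen_add)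

lemma WCQSym_uminus: "f \<in> WCQSym \<Longrightarrow> (\<lambda>m. - f m) \<in> WCQSym"
  unfolding WCQSym_def by (force simp: sum_negf intro: exI[of _ "\<lambda>\<gamma>. - _ \<gamma>"])

lemma Mq_in_WCQSym: "is_comp \<gamma> \<Longrightarrow> Mq \<gamma> \<in> WCQSym"
  unfolding WCQSym_def by (intro CollectI exI[of _ "{\<gamma>}"] exI[of _ "\<lambda>_. 1"]) simp

abbreviation eps_ideal :: "'k::comm_ring_1 ser set" where
  "eps_ideal \<equiv> ideal_gen WCQSym (Mq ` C_eps)"

lemma Mq_in_eps_ideal: "\<gamma> \<in> C_eps \<Longrightarrow> Mq \<gamma> \<in> eps_ideal"
proof -
  assume "\<gamma> \<in> C_eps"
  then have "is_comp \<gamma>" by (simp add: C_eps_def)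
  have "ser_mult (Mq []) (Mq \<gamma>) \<in> eps_ideal"
    using \<open>\<gamma> \<in> C_eps\<close> by (intro ser_mult_in_ideal_gen Mq_in_WCQSym) simp_all
  moreover have "ser_mult (Mq []) (Mq \<gamma>) = Mq \<gamma>"
    using ser_mult_Mq[OF is_comp_Nil \<open>is_comp \<gamma>\<close>] by (simp add: Mq_quasi_shuffle_def)
  ultimately show ?thesis by metis
qed

section \<open>The sums \<open>M\<^sub>Q\<^sub>\<epsilon>\<^sub>R + M\<^sub>Q\<^sub>R\<close> lie in the ideal\<close>

definition eps_pair :: "ntilde list \<Rightarrow> ntilde list \<Rightarrow> 'k::comm_ring_1 ser" where
  "eps_pair Q R = (\<lambda>m. Mq (Q @ Eps # R) m + Mq (Q @ R) m)"

definition shuffled_eps_pair :: "ntilde list \<Rightarrow> ntilde list \<Rightarrow> ntilde list \<Rightarrow> 'k::comm_ring_1 ser" where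
  "shuffled_eps_pair Q \<alpha> R = (\<lambda>m. (\<Sum>w \<leftarrow> quasi_shuffles \<alpha> (Eps # R). Mq (Q @ w) m)
                                 + (\<Sum>w \<leftarrow> quasi_shuffles \<alpha> R. Mq (Q @ w) m))"

lemma shuffled_eps_pair_Nil: "shuffled_eps_pair Q [] R = eps_pair Q R"
  by (simp add: shuffled_eps_pair_def eps_pair_def)

lemma shuffled_eps_pair_Cons:
  assumes "b \<noteq> Num 0"
  shows "shuffled_eps_pair Q (b # \<alpha>) R =
           (\<lambda>m. shuffled_eps_pair (Q @ [b]) \<alpha> R m + (\<Sum>X \<leftarrow> quasi_shuffles (b # \<alpha>) R. eps_pair Q X m))"
  using assms
  by (simp add: shuffled_eps_pair_def eps_pair_def nadd_Eps_right sum_list_addf comp_def add_ac)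

lemma shuffled_eps_pair_singleton_in_eps_ideal:
  assumes "is_comp (c # \<alpha>)" and "is_comp R"
  shows "shuffled_eps_pair [c] \<alpha> R \<in> (eps_ideal :: 'k::comm_ring_1 ser set)"
proof -
  have "is_comp (Eps # R)" using assms(2) by simp
  have "ser_mult (Mq (c # \<alpha>)) (Mq (Eps # R)) \<in> (eps_ideal :: 'k::comm_ring_1 ser set)"
    using assms by (intro ser_mult_in_ideal_gen Mq_in_WCQSym) (auto simp: C_eps_def)
  moreover have "(\<lambda>m. \<Sum>w \<leftarrow> quasi_shuffles (c # \<alpha>) R. Mq (Eps # w) m) \<in> (eps_ideal :: 'k::comm_ring_1 ser set)"
  proof (rule ideal_gen_sum_list)
    fix w
    assume "w \<in> set (quasi_shuffles (c # \<alpha>) R)"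
    then have "is_comp w" using is_comp_quasi_shuffles[OF assms] by blast
    then show "Mq (Eps # w) \<in> (eps_ideal :: 'k::comm_ring_1 ser set)" by (intro Mq_in_eps_ideal) (simp add: C_eps_def)
  qed
  ultimately have "(\<lambda>m. ser_mult (Mq (c # \<alpha>)) (Mq (Eps # R)) m
      - (\<Sum>w \<leftarrow> quasi_shuffles (c # \<alpha>) R. Mq (Eps # w) m)) \<in> (eps_ideal :: 'k::comm_ring_1 ser set)"
    by (intro ideal_gen_diff WCQSym_uminus)
  moreover have "(\<lambda>m. ser_mult (Mq (c # \<alpha>)) (Mq (Eps # R)) m
      - (\<Sum>w \<leftarrow> quasi_shuffles (c # \<alpha>) R. Mq (Eps # w) m)) = (shuffled_eps_pair [c] \<alpha> R :: 'k ser)"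
    using assms \<open>is_comp (Eps # R)\<close>
    by (simp add: ser_mult_Mq Mq_quasi_shuffle_def shuffled_eps_pair_def nadd_Eps_right comp_def)
  ultimately show ?thesis by simp
qed

lemma eps_pair_in_eps_ideal_if_shuffled:
  assumes shorter: "\<And>Q' R'. length Q' < length (Q @ \<alpha>) \<Longrightarrow> Q' \<noteq> [] \<Longrightarrow> is_comp Q' \<Longrightarrow> is_comp R'
                      \<Longrightarrow> eps_pair Q' R' \<in> (eps_ideal :: 'k::comm_ring_1 ser set)"
    and "Q \<noteq> []" and "is_comp (Q @ \<alpha>)" and "is_comp R"
    and "shuffled_eps_pair Q \<alpha> R \<in> (eps_ideal :: 'k::comm_ring_1 ser set)"
  shows "eps_pair (Q @ \<alpha>) R \<in> (eps_ideal :: 'k::comm_ring_1 ser set)"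
  using assms
proof (induction \<alpha> arbitrary: Q)
  case Nil
  then show ?case by (simp add: shuffled_eps_pair_Nil)
next
  case (Cons b \<alpha>)
  have "b \<noteq> Num 0" and "is_comp Q" and "is_comp (b # \<alpha>)" using Cons.prems(3) by simp_all
  have "(\<lambda>m. \<Sum>X \<leftarrow> quasi_shuffles (b # \<alpha>) R. eps_pair Q X m) \<in> (eps_ideal :: 'k::comm_ring_1 ser set)"
  proof (rule ideal_gen_sum_list)
    fix X
    assume "X \<in> set (quasi_shuffles (b # \<alpha>) R)"
    then have "is_comp X" using is_comp_quasi_shuffles[OF \<open>is_comp (b # \<alpha>)\<close> Cons.prems(4)] by blast
    then show "eps_pair Q X \<in> (eps_ideal :: 'k::comm_ring_1 ser set)"
      using Cons.prems(1)[of Q X] \<open>Q \<noteq> []\<close> \<open>is_comp Q\<close> by simp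
  qed
  with Cons.prems(5) have "(\<lambda>m. shuffled_eps_pair Q (b # \<alpha>) R m
      - (\<Sum>X \<leftarrow> quasi_shuffles (b # \<alpha>) R. eps_pair Q X m)) \<in> (eps_ideal :: 'k::comm_ring_1 ser set)"
    by (intro ideal_gen_diff WCQSym_uminus)
  then have "shuffled_eps_pair (Q @ [b]) \<alpha> R \<in> (eps_ideal :: 'k::comm_ring_1 ser set)"
    by (simp add: shuffled_eps_pair_Cons[OF \<open>b \<noteq> Num 0\<close>])
  then have "eps_pair ((Q @ [b]) @ \<alpha>) R \<in> (eps_ideal :: 'k::comm_ring_1 ser set)"
    using Cons.IH[of "Q @ [b]"] Cons.prems by simp
  then show ?case by simp
qed

lemma eps_pair_in_eps_ideal:
  "Q \<noteq> [] \<Longrightarrow> is_comp Q \<Longrightarrow> is_comp R \<Longrightarrow> eps_pair Q R \<in> (eps_ideal :: 'k::comm_ring_1 ser set)"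
proof (induction "length Q" arbitrary: Q R rule: less_induct)
  case less
  obtain c \<alpha> where Q: "Q = c # \<alpha>" using less.prems(1) by (cases Q) auto
  have "shuffled_eps_pair [c] \<alpha> R \<in> (eps_ideal :: 'k::comm_ring_1 ser set)"
    using less.prems Q by (intro shuffled_eps_pair_singleton_in_eps_ideal) simp_all
  then have "eps_pair ([c] @ \<alpha>) R \<in> (eps_ideal :: 'k::comm_ring_1 ser set)"
    using less.prems Q by (intro eps_pair_in_eps_ideal_if_shuffled less.hyps) simp_all
  then show ?case using Q by simp
qed

theorem lemma3p10:
  fixes a :: nat and \<alpha>s :: "nat list" and rest :: "ntilde list"
  assumes kQ: "\<forall>n::nat. n > 0 \<longrightarrow> (\<exists>y::'k::comm_ring_1. of_nat n * y = 1)"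
    and a_pos: "a > 0"
    and \<alpha>s_pos: "\<forall>x \<in> set \<alpha>s. x > 0"
    and rest_comp: "is_comp rest"
  shows "ser_add (Mq (Num a # map Num \<alpha>s @ Eps # rest))
                 (Mq (Num a # map Num \<alpha>s @ rest))
         \<in> ideal_gen (WCQSym :: 'k ser set) (Mq ` C_eps)"
proof -
  have "is_comp (Num a # map Num \<alpha>s)" using a_pos \<alpha>s_pos by (auto simp: is_comp_def)
  then have "eps_pair (Num a # map Num \<alpha>s) rest \<in> (eps_ideal :: 'k ser set)"
    using rest_comp by (intro eps_pair_in_eps_ideal) simp_all
  then show ?thesis by (simp add: eps_pair_def ser_add_def)
qed

end
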